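(* Let $M:\alpha\mapsto M_\alpha$ be a matroid flock on a finite set $E$, let $\alpha\in\mathbb{Z}^E$, and let $J\subseteq E$. If $M_\alpha=M_{\alpha+e_J}$, then $\lambda_{M_\alpha}(J)=0$.
   Context: $e_J:=\sum_{i\in J}e_i$ ($e_i$ unit vectors), $\mathbf{1}:=e_E$. A matroid flock of rank $d$ on $E$ is a map $M$ assigning to each $\alpha\in\mathbb{Z}^E$ a matroid $M_\alpha$ on $E$ of rank $d$ with (MF1) $M_\alpha/i=M_{\alpha+e_i}\setminus i$ for all $\alpha$, $i$ (contraction, deletion); and (MF2) $M_\alpha=M_{\alpha+\mathbf{1}}$. For a matroid $N$ on $E$ with rank function $r_N$, the connectivity function is $\lambda_N(J):=r_N(J)+r_N(E\setminus J)-r_N(E)$. *)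

theory Defs
  imports Main
begin

definition matroid :: "'a set \<Rightarrow> 'a set set \<Rightarrow> bool" where
  "matroid E Ind \<longleftrightarrow> finite E \<and> Ind \<subseteq> Pow E \<and> {} \<in> Ind
     \<and> (\<forall>X Y. Y \<in> Ind \<longrightarrow> X \<subseteq> Y \<longrightarrow> X \<in> Ind)
     \<and> (\<forall>X Y. X \<in> Ind \<longrightarrow> Y \<in> Ind \<longrightarrow> card X < card Y
            \<longrightarrow> (\<exists>y \<in> Y - X. insert y X \<in> Ind))"

definition mrank :: "'a set set \<Rightarrow> 'a set \<Rightarrow> nat" where
  "mrank Ind X = Max (card ` {Y. Y \<subseteq> X \<and> Y \<in> Ind})"

definition mdelete :: "'a set set \<Rightarrow> 'a \<Rightarrow> 'a set set" where
  "mdelete Ind i = {Y \<in> Ind. i \<notin> Y}"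

definition mcontract :: "'a set \<Rightarrow> 'a set set \<Rightarrow> 'a \<Rightarrow> 'a set set" where
  "mcontract E Ind i = {Y. Y \<subseteq> E - {i} \<and> mrank Ind (insert i Y) = card Y + mrank Ind {i}}"

definition evec :: "'a set \<Rightarrow> 'a \<Rightarrow> int" where
  "evec J = (\<lambda>x. if x \<in> J then 1 else 0)"

definition vadd :: "('a \<Rightarrow> int) \<Rightarrow> ('a \<Rightarrow> int) \<Rightarrow> 'a \<Rightarrow> int" where
  "vadd \<alpha> \<beta> = (\<lambda>x. \<alpha> x + \<beta> x)"

definition matroid_flock :: "nat \<Rightarrow> (('a::finite \<Rightarrow> int) \<Rightarrow> 'a set set) \<Rightarrow> bool" where
  "matroid_flock d M \<longleftrightarrow>
     (\<forall>\<alpha>. matroid UNIV (M \<alpha>) \<and> mrank (M \<alpha>) UNIV = d)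
   \<and> (\<forall>\<alpha> i. mcontract UNIV (M \<alpha>) i = mdelete (M (vadd \<alpha> (evec {i}))) i)
   \<and> (\<forall>\<alpha>. M \<alpha> = M (vadd \<alpha> (evec UNIV)))"

definition conn :: "'a set \<Rightarrow> 'a set set \<Rightarrow> 'a set \<Rightarrow> int" where
  "conn E Ind J = int (mrank Ind J) + int (mrank Ind (E - J)) - int (mrank Ind E)"

end

theory Submission
  imports Defs
begin

text \<open>Iterating (MF1) over the elements of \<open>J\<close> shows that the independent sets of
  \<open>M(\<alpha> + e_J)\<close> avoiding \<open>J\<close> are exactly those of the contraction \<open>M(\<alpha>)/J\<close>.
  If \<open>M(\<alpha>) = M(\<alpha> + e_J)\<close>, a basis \<open>Y\<close> of \<open>E - J\<close> in \<open>M(\<alpha>)\<close> is therefore independent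
  in \<open>M(\<alpha>)/J\<close>, so \<open>r(E - J) + r(J) = r(Y \<union> J) \<le> r(E)\<close>; the reverse inequality is
  subadditivity of the rank.\<close>

lemma mrank_eqI:
  assumes "Y \<subseteq> X" "Y \<in> Ind" "card Y = n"
    and "\<And>Z. Z \<subseteq> X \<Longrightarrow> Z \<in> Ind \<Longrightarrow> card Z \<le> n"
  shows "mrank Ind X = n"
proof -
  have "card ` {Y. Y \<subseteq> X \<and> Y \<in> Ind} \<subseteq> {..n}"
    using assms(4) by auto
  then have "finite (card ` {Y. Y \<subseteq> X \<and> Y \<in> Ind})"
    using finite_subset by blast
  then show ?thesis
    unfolding mrank_def using assms by (intro Max_eqI) auto
qed

lemma matroid_indep_subset: "matroid E Ind \<Longrightarrow> Y \<in> Ind \<Longrightarrow> X \<subseteq> Y \<Longrightarrow> X \<in> Ind"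
  unfolding matroid_def by blast

lemma matroid_augment:
  "matroid E Ind \<Longrightarrow> X \<in> Ind \<Longrightarrow> Y \<in> Ind \<Longrightarrow> card X < card Y
    \<Longrightarrow> \<exists>y \<in> Y - X. insert y X \<in> Ind"
  unfolding matroid_def by blast

lemma matroid_indep_finite: "matroid E Ind \<Longrightarrow> Y \<in> Ind \<Longrightarrow> finite Y"
  unfolding matroid_def by (meson PowD finite_subset subsetD)

lemma matroid_finite_indeps: "matroid E Ind \<Longrightarrow> finite {Y. Y \<subseteq> X \<and> Y \<in> Ind}"
  unfolding matroid_def by (rule finite_subset[of _ "Pow E"]) auto

lemma card_le_mrank:
  "matroid E Ind \<Longrightarrow> Y \<subseteq> X \<Longrightarrow> Y \<in> Ind \<Longrightarrow> card Y \<le> mrank Ind X"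
  unfolding mrank_def
  by (rule Max_ge) (auto intro: finite_imageI[OF matroid_finite_indeps])

lemma mrank_witness:
  assumes "matroid E Ind"
  obtains Y where "Y \<subseteq> X" "Y \<in> Ind" "card Y = mrank Ind X"
proof -
  have "{} \<in> {Y. Y \<subseteq> X \<and> Y \<in> Ind}"
    using assms unfolding matroid_def by auto
  then have "mrank Ind X \<in> card ` {Y. Y \<subseteq> X \<and> Y \<in> Ind}"
    unfolding mrank_def by (intro Max_in finite_imageI matroid_finite_indeps[OF assms]) auto
  then show ?thesis using that by force
qed

lemma mrank_mono: "matroid E Ind \<Longrightarrow> X \<subseteq> X' \<Longrightarrow> mrank Ind X \<le> mrank Ind X'"
  by (metis card_le_mrank mrank_witness order_trans)

lemma mrank_indep: "matroid E Ind \<Longrightarrow> Y \<in> Ind \<Longrightarrow> mrank Ind Y = card Y"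
  by (metis card_mono le_antisym matroid_indep_finite card_le_mrank mrank_witness order_refl)

lemma indep_if_mrank_eq_card: "matroid E Ind \<Longrightarrow> finite Y \<Longrightarrow> mrank Ind Y = card Y \<Longrightarrow> Y \<in> Ind"
  by (metis card_subset_eq mrank_witness)

lemma mrank_empty: "matroid E Ind \<Longrightarrow> mrank Ind {} = 0"
  using mrank_indep[of E Ind "{}"] unfolding matroid_def by auto

lemma mrank_Un_le:
  assumes m: "matroid E Ind"
  shows "mrank Ind (A \<union> B) \<le> mrank Ind A + mrank Ind B"
proof -
  obtain Y where Y: "Y \<subseteq> A \<union> B" "Y \<in> Ind" "card Y = mrank Ind (A \<union> B)"
    by (rule mrank_witness[OF m])
  have "card (Y \<inter> A) \<le> mrank Ind A"
    using matroid_indep_subset[OF m Y(2)] by (intro card_le_mrank[OF m]) auto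
  moreover have "card (Y - A) \<le> mrank Ind B"
    using Y(1) matroid_indep_subset[OF m Y(2)] by (intro card_le_mrank[OF m]) auto
  moreover have "card Y = card (Y \<inter> A) + card (Y - A)"
    using matroid_indep_finite[OF m Y(2)] by (rule card_Int_Diff)
  ultimately show ?thesis using Y(3) by linarith
qed

lemma matroid_extend_to_basis:
  assumes m: "matroid E Ind" and I: "I \<in> Ind" "I \<subseteq> S"
  obtains B where "I \<subseteq> B" "B \<subseteq> S" "B \<in> Ind" "card B = mrank Ind S"
proof -
  let ?C = "{B. I \<subseteq> B \<and> B \<subseteq> S \<and> B \<in> Ind}"
  have fin: "finite (card ` ?C)"
    by (rule finite_imageI, rule finite_subset[OF _ matroid_finite_indeps[OF m, of S]]) auto
  have "Max (card ` ?C) \<in> card ` ?C"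
    using I by (intro Max_in fin) auto
  then obtain B where B: "B \<in> ?C" "card B = Max (card ` ?C)" by force
  have maximal: "card B' \<le> card B" if "B' \<in> ?C" for B'
    using B(2) Max_ge[OF fin] that by auto
  have "\<not> card B < mrank Ind S"
  proof
    assume lt: "card B < mrank Ind S"
    obtain Z where Z: "Z \<subseteq> S" "Z \<in> Ind" "card Z = mrank Ind S"
      by (rule mrank_witness[OF m])
    with lt B(1) obtain y where y: "y \<in> Z - B" "insert y B \<in> Ind"
      using matroid_augment[OF m, of B Z] by auto
    then have "insert y B \<in> ?C" using Z B(1) by auto
    moreover have "card (insert y B) = Suc (card B)"
      using y matroid_indep_finite[OF m, of B] B(1) by auto
    ultimately show False using maximal[of "insert y B"] by simp
  qed
  moreover have "card B \<le> mrank Ind S"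
    using B(1) by (intro card_le_mrank[OF m]) auto
  ultimately have "card B = mrank Ind S" by linarith
  with B(1) show ?thesis by (intro that) auto
qed

lemma mrank_mdelete: "i \<notin> X \<Longrightarrow> mrank (mdelete Ind i) X = mrank Ind X"
  unfolding mrank_def mdelete_def
  by (rule arg_cong[where f="\<lambda>A. Max (card ` A)"]) auto

lemma mrank_mcontract:
  assumes m: "matroid E Ind" and X: "X \<subseteq> E - {i}"
  shows "mrank (mcontract E Ind i) X = mrank Ind (insert i X) - mrank Ind {i}"
proof -
  let ?r = "mrank Ind"
  have upper: "card Z \<le> ?r (insert i X) - ?r {i}" if "Z \<subseteq> X" "Z \<in> mcontract E Ind i" for Z
  proof -
    have "?r (insert i Z) = card Z + ?r {i}"
      using that(2) unfolding mcontract_def by blast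
    moreover have "?r (insert i Z) \<le> ?r (insert i X)"
      using that(1) by (intro mrank_mono[OF m]) auto
    ultimately show ?thesis by linarith
  qed
  obtain I where I: "I \<subseteq> {i}" "I \<in> Ind" "card I = ?r {i}"
    by (rule mrank_witness[OF m])
  have "I \<subseteq> insert i X" using I(1) by blast
  then obtain B where B: "I \<subseteq> B" "B \<subseteq> insert i X" "B \<in> Ind" "card B = ?r (insert i X)"
    by (rule matroid_extend_to_basis[OF m I(2)])
  have finB: "finite B" using matroid_indep_finite[OF m B(3)] .
  have "card (B \<inter> {i}) = ?r {i}"
  proof (rule antisym)
    have "B \<inter> {i} \<in> Ind" using matroid_indep_subset[OF m B(3)] by blast
    then show "card (B \<inter> {i}) \<le> ?r {i}"
      by (rule card_le_mrank[OF m, rotated]) blast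
    have "card I \<le> card (B \<inter> {i})"
      using I(1) B(1) finB by (intro card_mono) auto
    then show "?r {i} \<le> card (B \<inter> {i})" using I(3) by simp
  qed
  moreover have "card (B \<inter> {i}) \<le> card B"
    using finB by (intro card_mono) auto
  ultimately have card_split: "card (B - {i}) + ?r {i} = card B"
    using card_Diff_subset_Int[of B "{i}"] finB by simp
  have "?r (insert i (B - {i})) = card B"
  proof (rule antisym)
    have "?r (insert i (B - {i})) \<le> ?r (insert i X)"
      using B(2) by (intro mrank_mono[OF m]) blast
    then show "?r (insert i (B - {i})) \<le> card B"
      using B(4) by simp
    show "card B \<le> ?r (insert i (B - {i}))"
      by (rule card_le_mrank[OF m _ B(3)]) blast
  qed
  then have "B - {i} \<in> mcontract E Ind i"
    using B(2) X card_split unfolding mcontract_def by auto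
  moreover have "B - {i} \<subseteq> X" using B(2) by blast
  moreover have "card (B - {i}) = ?r (insert i X) - ?r {i}"
    using card_split B(4) by simp
  ultimately show ?thesis
    using upper by (intro mrank_eqI[of "B - {i}"])
qed

lemma matroid_flock_matroid: "matroid_flock d M \<Longrightarrow> matroid UNIV (M \<alpha>)"
  unfolding matroid_flock_def by (drule conjunct1) simp

lemma matroid_flock_contract:
  "matroid_flock d M \<Longrightarrow> mcontract UNIV (M \<alpha>) i = mdelete (M (vadd \<alpha> (evec {i}))) i"
  unfolding matroid_flock_def by (drule conjunct2, drule conjunct1) simp

lemma vadd_evec_empty: "vadd \<alpha> (evec {}) = \<alpha>"
  unfolding vadd_def evec_def by simp

lemma vadd_evec_insert:
  "i \<notin> F \<Longrightarrow> vadd \<alpha> (evec (insert i F)) = vadd (vadd \<alpha> (evec {i})) (evec F)"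
  unfolding vadd_def evec_def by auto

lemma matroid_flock_mrank_step:
  assumes fl: "matroid_flock d M" and "i \<notin> X"
  shows "mrank (M (vadd \<alpha> (evec {i}))) X = mrank (M \<alpha>) (insert i X) - mrank (M \<alpha>) {i}"
proof -
  have "mrank (M (vadd \<alpha> (evec {i}))) X = mrank (mdelete (M (vadd \<alpha> (evec {i}))) i) X"
    using \<open>i \<notin> X\<close> by (simp add: mrank_mdelete)
  also have "\<dots> = mrank (mcontract UNIV (M \<alpha>) i) X"
    by (simp add: matroid_flock_contract[OF fl])
  also have "\<dots> = mrank (M \<alpha>) (insert i X) - mrank (M \<alpha>) {i}"
    using \<open>i \<notin> X\<close> by (intro mrank_mcontract[OF matroid_flock_matroid[OF fl]]) blast
  finally show ?thesis .
qed

lemma matroid_flock_indep_shift_iff: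
  assumes fl: "matroid_flock d M" and "Y \<subseteq> - J"
  shows "Y \<in> M (vadd \<alpha> (evec J)) \<longleftrightarrow> mrank (M \<alpha>) (Y \<union> J) = card Y + mrank (M \<alpha>) J"
  using finite[of J] assms(2)
proof (induction J arbitrary: \<alpha> rule: finite_induct)
  case empty
  have m: "matroid UNIV (M \<alpha>)" using matroid_flock_matroid[OF fl] .
  show ?case
    using mrank_indep[OF m, of Y] indep_if_mrank_eq_card[OF m finite, of Y]
    by (auto simp: vadd_evec_empty mrank_empty[OF m])
next
  case (insert i F)
  let ?\<alpha>' = "vadd \<alpha> (evec {i})"
  let ?r = "mrank (M \<alpha>)" and ?r' = "mrank (M ?\<alpha>')"
  have m: "matroid UNIV (M \<alpha>)" using matroid_flock_matroid[OF fl] .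
  have shift: "vadd \<alpha> (evec (insert i F)) = vadd ?\<alpha>' (evec F)"
    using insert.hyps(2) by (rule vadd_evec_insert)
  have "i \<notin> Y \<union> F" using insert.prems insert.hyps by auto
  then have r'_YF: "?r' (Y \<union> F) = ?r (insert i (Y \<union> F)) - ?r {i}"
    and r'_F: "?r' F = ?r (insert i F) - ?r {i}"
    by (auto intro: matroid_flock_mrank_step[OF fl])
  have "?r {i} \<le> ?r (insert i F)" "?r (insert i F) \<le> ?r (insert i (Y \<union> F))"
    by (auto intro: mrank_mono[OF m])
  then have "?r' (Y \<union> F) = card Y + ?r' F \<longleftrightarrow> ?r (insert i (Y \<union> F)) = card Y + ?r (insert i F)"
    unfolding r'_YF r'_F by (intro iffI) linarith+
  moreover have "Y \<in> M (vadd \<alpha> (evec (insert i F))) \<longleftrightarrow> ?r' (Y \<union> F) = card Y + ?r' F"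
    unfolding shift using insert.IH[of ?\<alpha>'] insert.prems by blast
  moreover have "Y \<union> insert i F = insert i (Y \<union> F)" by blast
  ultimately show ?case by (simp only:)
qed

theorem mainTheorem17:
  fixes M :: "('a::finite \<Rightarrow> int) \<Rightarrow> 'a set set" and d :: nat
    and \<alpha> :: "'a \<Rightarrow> int" and J :: "'a set"
  assumes "matroid_flock d M"
    and "M \<alpha> = M (vadd \<alpha> (evec J))"
  shows "conn UNIV (M \<alpha>) J = 0"
proof -
  let ?r = "mrank (M \<alpha>)"
  have m: "matroid UNIV (M \<alpha>)" using matroid_flock_matroid[OF assms(1)] .
  obtain Y where Y: "Y \<subseteq> - J" "Y \<in> M \<alpha>" "card Y = ?r (- J)"
    by (rule mrank_witness[OF m])
  have "?r (Y \<union> J) = card Y + ?r J"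
    using matroid_flock_indep_shift_iff[OF assms(1) Y(1)] Y(2) assms(2) by simp
  moreover have "?r (Y \<union> J) \<le> ?r UNIV"
    by (rule mrank_mono[OF m]) simp
  moreover have "?r UNIV \<le> ?r J + ?r (- J)"
    using mrank_Un_le[OF m, of J "- J"] by simp
  ultimately show ?thesis
    unfolding conn_def Compl_eq_Diff_UNIV[symmetric] using Y(3) by simp
qed

end
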